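(* Let $0<e<\Lambda$, $\phi_h>0$, $f:[0,\phi_h]\to(0,1]$ strictly concave, strictly decreasing, differentiable with $f(0)=1$. Consider the two-player game with action sets $[0,\phi_h]$ and payoffs $\tilde{\mathcal M}_i(\phi_i,\phi_{-i})$ given by: - if $\phi_i=\phi_{-i}$: $e\phi_i$ if $\phi_i<\underline\phi$, and $\frac{\Lambda}{2}f(\phi_i)\phi_i$ if $\phi_i\ge\underline\phi$; - if $\phi_i<\phi_{-i}$: $e\phi_i$ if $\phi_{-i}<\bar\phi$, and $\min\{\Lambda f(\phi_i),e\}\phi_i$ if $\phi_{-i}\ge\bar\phi$; - if $\phi_i>\phi_{-i}$: $e\phi_i$ if $\phi_i<\underline\phi$, $m(\phi_i)$ if $\phi_i\in[\underline\phi,\bar\phi)$, and $0$ if $\phi_i\ge\bar\phi$. Let $\phi^*_m$ be the unique maximizer of $m(\phi)=(\Lambda f(\phi)-e)\phi$ over $[0,\phi_h]$. If $\phi^*_m\le\underline\phi\le\phi_h$, then $(\underline\phi,\underline\phi)$ is a Nash equilibrium.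
   Context: These payoffs are the limiting (driver abandonment rate $\beta\to0$) long-run revenue rates of two symmetric ride-hailing platforms using static prices, when passengers (total Poisson rate $\Lambda$) split across platforms by a Wardrop equilibrium equalizing the probability of not obtaining a ride (either no available driver or rejection of the quoted price); $e$ is the effective driver arrival rate per platform and $f(\phi)$ the probability a passenger accepts price $\phi$. Thresholds: $\underline{\phi}:=\inf\{\phi\in[0,\phi_h]: f(\phi)\le 2e/\Lambda\}$, $\bar\phi:=\inf\{\phi\in[0,\phi_h]: f(\phi)\le e/\Lambda\}$, with $\inf\emptyset=+\infty$ (so $\underline\phi=f^{-1}(2e/\Lambda)$, $\bar\phi=f^{-1}(e/\Lambda)$ when in range, and $0$ when $2e/\Lambda>1$, resp. $e/\Lambda>1$). A Nash equilibrium is a profile from which no player can strictly increase its payoff by unilateral deviation. *)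

theory Defs
  imports "HOL-Analysis.Analysis" "HOL-Library.Extended_Real"
begin

definition strictly_concave_on :: "real set \<Rightarrow> (real \<Rightarrow> real) \<Rightarrow> bool" where
  "strictly_concave_on S f \<longleftrightarrow> convex S \<and>
     (\<forall>x\<in>S. \<forall>y\<in>S. \<forall>t::real. x \<noteq> y \<and> 0 < t \<and> t < 1 \<longrightarrow>
        t * f x + (1 - t) * f y < f (t * x + (1 - t) * y))"

text \<open>Thresholds, as infima in the extended reals (so that the infimum of the empty set is +infinity).\<close>
definition phi_low :: "real \<Rightarrow> real \<Rightarrow> (real \<Rightarrow> real) \<Rightarrow> real \<Rightarrow> ereal" where
  "phi_low Lam e f phih = Inf (ereal ` {p \<in> {0..phih}. f p \<le> 2 * e / Lam})"

definition phi_bar :: "real \<Rightarrow> real \<Rightarrow> (real \<Rightarrow> real) \<Rightarrow> real \<Rightarrow> ereal" where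
  "phi_bar Lam e f phih = Inf (ereal ` {p \<in> {0..phih}. f p \<le> e / Lam})"

definition mfun :: "real \<Rightarrow> real \<Rightarrow> (real \<Rightarrow> real) \<Rightarrow> real \<Rightarrow> real" where
  "mfun Lam e f p = (Lam * f p - e) * p"

definition payoff :: "real \<Rightarrow> real \<Rightarrow> (real \<Rightarrow> real) \<Rightarrow> real \<Rightarrow> real \<Rightarrow> real \<Rightarrow> real" where
  "payoff Lam e f phih q1 q2 =
     (let lo = phi_low Lam e f phih; hi = phi_bar Lam e f phih in
      if q1 = q2 then
        (if ereal q1 < lo then e * q1 else Lam / 2 * f q1 * q1)
      else if q1 < q2 then
        (if ereal q2 < hi then e * q1 else min (Lam * f q1) e * q1)
      else
        (if ereal q1 < lo then e * q1
         else if ereal q1 < hi then mfun Lam e f q1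
         else 0))"

definition nash_equilibrium :: "(real \<Rightarrow> real \<Rightarrow> real) \<Rightarrow> real set \<Rightarrow> real \<Rightarrow> real \<Rightarrow> bool" where
  "nash_equilibrium M A p1 p2 \<longleftrightarrow> p1 \<in> A \<and> p2 \<in> A \<and>
     (\<forall>x\<in>A. M x p2 \<le> M p1 p2) \<and> (\<forall>x\<in>A. M x p1 \<le> M p2 p1)"

end

theory Submission
  imports Defs
begin

text \<open>At the threshold \<open>l\<close> capacity binds exactly, \<open>\<Lambda> f(l) = 2e\<close> (unless \<open>l = 0\<close>), so the
  symmetric payoff is \<open>\<Lambda>/2 f(l) l = e l\<close> and also \<open>m(l) = e l\<close>. Undercutting earns at most
  \<open>e \<phi> \<le> e l\<close>. Overcutting earns \<open>m(\<phi>)\<close> or \<open>0\<close>; since \<open>p f(p)\<close> is concave (a product of the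
  increasing identity and the decreasing concave \<open>f \<ge> 0\<close>), \<open>m\<close> is concave, hence nonincreasing to
  the right of its maximiser \<open>\<phi>\<^sup>*\<^sub>m \<le> l\<close>, so \<open>m(\<phi>) \<le> m(l) = e l\<close>.\<close>

lemma strictly_concave_on_imp_concave_on:
  assumes "strictly_concave_on S f"
  shows "concave_on S f"
proof (rule concave_on_linorderI)
  show "convex S" using assms unfolding strictly_concave_on_def by blast
next
  fix t x y :: real
  assume "0 < t" "t < 1" "x \<in> S" "y \<in> S" "x < y"
  moreover have strict: "\<And>x y t. x \<in> S \<Longrightarrow> y \<in> S \<Longrightarrow> x \<noteq> y \<Longrightarrow> 0 < t \<Longrightarrow> t < 1 \<Longrightarrow>
      t * f x + (1 - t) * f y < f (t * x + (1 - t) * y)"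
    using assms unfolding strictly_concave_on_def by blast
  ultimately have "(1 - t) * f x + (1 - (1 - t)) * f y < f ((1 - t) * x + (1 - (1 - t)) * y)"
    by (intro strict) auto
  then show "(1 - t) * f x + t * f y \<le> f ((1 - t) *\<^sub>R x + t *\<^sub>R y)" by simp
qed

lemma concave_on_mfun:
  assumes "0 \<le> Lam" and "concave_on S f" and "antimono_on S f"
    and "S \<subseteq> {0..}" and "\<forall>p\<in>S. 0 \<le> f p"
  shows "concave_on S (mfun Lam e f)"
proof -
  have convex: "convex S" using assms(2) by (rule concave_on_imp_convex)
  have "concave_on S (\<lambda>p. p * f p)"
    using assms(2-5) convex by (intro concave_on_mul) (auto simp: concave_on_ident monotone_on_def)
  moreover have "convex_on S (\<lambda>p. e * p)"
    using convex by (intro convex_onI) (auto simp: algebra_simps)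
  ultimately have "concave_on S (\<lambda>p. Lam * (p * f p) - e * p)"
    using assms(1) by (intro concave_on_diff concave_on_cmul)
  moreover have "mfun Lam e f = (\<lambda>p. Lam * (p * f p) - e * p)"
    by (auto simp: mfun_def algebra_simps)
  ultimately show ?thesis by simp
qed

lemma concave_on_antimono_beyond_max:
  fixes g :: "real \<Rightarrow> real"
  assumes g: "concave_on S g" and m: "m \<in> S" and max: "\<forall>x\<in>S. g x \<le> g m"
  shows "antimono_on (S \<inter> {m..}) g"
proof (rule monotone_onI)
  fix x y assume x: "x \<in> S \<inter> {m..}" and y: "y \<in> S \<inter> {m..}" and "x \<le> y"
  show "g y \<le> g x"
  proof (cases "y = m")
    case True
    with x \<open>x \<le> y\<close> show ?thesis by simp
  next
    case False
    define t where "t = (x - m) / (y - m)"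
    have t: "0 \<le> t" "t \<le> 1" and "m < y"
      using x y \<open>x \<le> y\<close> False by (auto simp: t_def field_simps)
    then have "t * (y - m) = x - m" by (simp add: t_def)
    then have "x = (1 - t) *\<^sub>R m + t *\<^sub>R y" by (simp add: algebra_simps)
    then have "(1 - t) * g m + t * g y \<le> g x"
      using concave_onD[OF g t m] y by simp
    moreover have "(1 - t) * g y \<le> (1 - t) * g m"
      using max y t by (simp add: mult_left_mono)
    ultimately show ?thesis by (simp add: algebra_simps)
  qed
qed

lemma Inf_sublevel_set:
  fixes f :: "real \<Rightarrow> real"
  assumes cont: "continuous_on {a..b} f" and ne: "{p \<in> {a..b}. f p \<le> c} \<noteq> {}"
  defines "l \<equiv> Inf {p \<in> {a..b}. f p \<le> c}"
  shows "l \<in> {a..b}" and "f l \<le> c" and "a < l \<Longrightarrow> f l = c"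
    and "Inf (ereal ` {p \<in> {a..b}. f p \<le> c}) = ereal l"
proof -
  let ?S = "{p \<in> {a..b}. f p \<le> c}"
  have "?S = {a..b} \<inter> f -` {..c}" by auto
  then have "closed ?S" using continuous_closed_preimage[OF cont] by simp
  moreover have bdd: "bdd_below ?S" by (rule bdd_belowI[of _ a]) auto
  ultimately have "l \<in> ?S" unfolding l_def using closed_contains_Inf[OF ne] by blast
  then show "l \<in> {a..b}" and le: "f l \<le> c" by auto
  show "Inf (ereal ` ?S) = ereal l" unfolding l_def using ereal_Inf'[OF bdd ne] by simp
  assume "a < l"
  have "{a..<l} \<subseteq> {a..b} \<inter> f -` {c..}"
    using \<open>l \<in> {a..b}\<close> cInf_lower[OF _ bdd] unfolding l_def by fastforce
  moreover have "closed ({a..b} \<inter> f -` {c..})" using continuous_closed_preimage[OF cont] by simp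
  ultimately have "closure {a..<l} \<subseteq> {a..b} \<inter> f -` {c..}" by (rule closure_minimal)
  moreover have "l \<in> closure {a..<l}" using \<open>a < l\<close> by simp
  ultimately have "c \<le> f l" by auto
  with le show "f l = c" by simp
qed

lemma phi_low_attained:
  assumes "continuous_on {0..phih} f" and "phi_low Lam e f phih \<le> ereal phih"
  obtains l where "phi_low Lam e f phih = ereal l" and "l \<in> {0..phih}"
    and "0 < l \<Longrightarrow> f l = 2 * e / Lam"
proof -
  have "{p \<in> {0..phih}. f p \<le> 2 * e / Lam} \<noteq> {}"
  proof
    assume "{p \<in> {0..phih}. f p \<le> 2 * e / Lam} = {}"
    then have "phi_low Lam e f phih = \<infinity>"
      unfolding phi_low_def by (metis Inf_empty image_empty top_ereal_def)
    with assms(2) show False by simp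
  qed
  from Inf_sublevel_set[OF assms(1) this] show ?thesis
    by (intro that) (auto simp: phi_low_def)
qed

lemma payoff_diagonal_phi_low:
  assumes "0 < Lam" and low: "phi_low Lam e f phih = ereal l" and "0 \<le> l"
    and level: "0 < l \<Longrightarrow> f l = 2 * e / Lam"
  shows "payoff Lam e f phih l l = e * l" and "mfun Lam e f l = e * l"
proof -
  have "Lam * f l * l = 2 * e * l"
    using level \<open>0 < Lam\<close> \<open>0 \<le> l\<close> by (cases "l = 0") auto
  then show "payoff Lam e f phih l l = e * l" and "mfun Lam e f l = e * l"
    by (simp_all add: payoff_def low mfun_def algebra_simps)
qed

lemma payoff_undercut_le:
  assumes "0 \<le> x" and "x < q"
  shows "payoff Lam e f phih x q \<le> e * x"
  using assms by (simp add: payoff_def Let_def mult_right_mono)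

lemma payoff_overcut_le:
  assumes "q < x" and "phi_low Lam e f phih \<le> ereal x"
  shows "payoff Lam e f phih x q \<le> max (mfun Lam e f x) 0"
  using assms by (auto simp: payoff_def Let_def not_less)

lemma payoff_le_diagonal_phi_low:
  assumes "0 < Lam" and "0 \<le> e" and low: "phi_low Lam e f phih = ereal l" and "0 \<le> l"
    and level: "0 < l \<Longrightarrow> f l = 2 * e / Lam" and "0 \<le> x"
    and m_le: "l < x \<Longrightarrow> mfun Lam e f x \<le> mfun Lam e f l"
  shows "payoff Lam e f phih x l \<le> payoff Lam e f phih l l"
proof -
  note diag = payoff_diagonal_phi_low[OF \<open>0 < Lam\<close> low \<open>0 \<le> l\<close> level]
  show ?thesis
  proof (cases x l rule: linorder_cases)
    case less
    have "payoff Lam e f phih x l \<le> e * x" using payoff_undercut_le less \<open>0 \<le> x\<close> by simp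
    also have "\<dots> \<le> e * l" using less \<open>0 \<le> e\<close> by (simp add: mult_left_mono)
    finally show ?thesis using diag by simp
  next
    case greater
    have "payoff Lam e f phih x l \<le> max (mfun Lam e f x) 0"
      using payoff_overcut_le greater low by simp
    moreover have "0 \<le> e * l" using \<open>0 \<le> e\<close> \<open>0 \<le> l\<close> by simp
    ultimately show ?thesis using diag m_le greater by (auto simp: max_def split: if_splits)
  qed simp
qed

theorem theorem4:
  fixes Lam e phih phim :: real and f :: "real \<Rightarrow> real"
  assumes he: "0 < e" and heL: "e < Lam" and hph: "0 < phih"
    and frange: "\<forall>p\<in>{0..phih}. 0 < f p \<and> f p \<le> 1"
    and fconc: "strictly_concave_on {0..phih} f"
    and fdec: "strict_antimono_on {0..phih} f"
    and fdiff: "\<forall>p\<in>{0..phih}. f differentiable (at p within {0..phih})"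
    and f0: "f 0 = 1"
    and mmax: "phim \<in> {0..phih}"
              "\<forall>p\<in>{0..phih}. p \<noteq> phim \<longrightarrow> mfun Lam e f p < mfun Lam e f phim"
    and hcond: "ereal phim \<le> phi_low Lam e f phih" "phi_low Lam e f phih \<le> ereal phih"
  shows "nash_equilibrium (payoff Lam e f phih) {0..phih}
           (real_of_ereal (phi_low Lam e f phih)) (real_of_ereal (phi_low Lam e f phih))"
proof -
  have Lam: "0 < Lam" using he heL by linarith
  have cont: "continuous_on {0..phih} f"
    using fdiff differentiable_imp_continuous_within continuous_on_eq_continuous_within by blast
  obtain l where low: "phi_low Lam e f phih = ereal l" and l: "l \<in> {0..phih}"
    and level: "0 < l \<Longrightarrow> f l = 2 * e / Lam"
    using phi_low_attained[OF cont hcond(2)] by blast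
  have "antimono_on {0..phih} f"
    using fdec by (auto simp: monotone_on_def order_le_less)
  then have "concave_on {0..phih} (mfun Lam e f)"
    using Lam fconc frange strictly_concave_on_imp_concave_on
    by (intro concave_on_mfun) (auto simp: less_imp_le)
  then have m_antimono: "antimono_on ({0..phih} \<inter> {phim..}) (mfun Lam e f)"
    using mmax by (intro concave_on_antimono_beyond_max) (auto intro: less_imp_le)
  have "payoff Lam e f phih x l \<le> payoff Lam e f phih l l" if x: "x \<in> {0..phih}" for x
  proof (rule payoff_le_diagonal_phi_low[OF Lam _ low _ level])
    show "l < x \<Longrightarrow> mfun Lam e f x \<le> mfun Lam e f l"
      using monotone_onD[OF m_antimono] x l hcond(1) low by auto
  qed (use he l x in auto)
  then show ?thesis unfolding nash_equilibrium_def low using l by simp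
qed

end
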